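(* For every admissible Betti function $b:\operatorname{int}\mathbb{M}\to\mathbb{N}_0$, the direct sum $\bigoplus_{v\in\operatorname{int}\mathbb{M}}B_v^{b(v)}:\mathbb{M}^{\circ}\to\mathrm{Vect}_{\mathbb{F}}$ lies in $\mathcal{J}$; in particular it is pointwise finite-dimensional and coincides with the product $\prod_{v}B_v^{b(v)}$.
   Context: Fix a field $\mathbb{F}$. Equip $\mathbb{R}^2$ with the partial order $(x,y)\preceq(x',y')$ iff $x'\le x$ and $y\le y'$. Fix reals $a<b$, let $l_0=\{x+y=a\}$, $l_1=\{x+y=b\}$, $\mathbb{M}=\{(x,y): a\le x+y\le b\}$, $\partial\mathbb{M}=l_0\cup l_1$, $\operatorname{int}\mathbb{M}=\mathbb{M}\setminus\partial\mathbb{M}$, and $T:\mathbb{M}\to\mathbb{M}$, $T(x,y)=(a-y,b-x)$. For $u\in\mathbb{M}$, ${\uparrow}u=\{v:u\preceq v\}$, ${\downarrow}u=\{v:v\preceq u\}$; $\operatorname{int}$ of a subset is its interior in $\mathbb{M}$. Functors $\mathbb{M}^{\circ}\to\mathrm{Vect}_{\mathbb{F}}$ are contravariant in $\preceq$. For $v\in\operatorname{int}\mathbb{M}$, $B_v$ is the functor with $B_v(u)=\mathbb{F}$ if $u\in({\downarrow}v)\cap\operatorname{int}({\uparrow}T^{-1}(v))$ and $0$ otherwise, internal maps identity when domain and codomain are $\mathbb{F}$ and zero otherwise. A functor $G$ vanishing on $\partial\mathbb{M}$ is cohomological if for every axis-aligned rectangle in $\mathbb{M}$ with one corner on $l_1$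 and remaining corners $u\preceq v\preceq w$, applying $G$ to the chain $\cdots\preceq T^{-1}(v)\preceq T^{-1}(w)\preceq u\preceq v\preceq w\preceq T(u)\preceq T(v)\preceq\cdots$ gives an exact sequence. $G$ is sequentially continuous if $G(u)\to\varprojlim_kG(u_k)$ is an isomorphism for every $\preceq$-increasing sequence $u_k\to u$. $\mathcal{J}$ is the full subcategory of pointwise finite-dimensional, cohomological, sequentially continuous functors with support contained in some ${\downarrow}w$. A function $b:\operatorname{int}\mathbb{M}\to\mathbb{N}_0$ is an admissible Betti function if its support is contained in ${\downarrow}w$ for some $w\in\mathbb{M}$ and $\sum_{v\in({\uparrow}u)\cap\operatorname{int}({\downarrow}T(u))}b(v)<\infty$ for every $u\in\operatorname{int}\mathbb{M}$. *)

theory Defs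
  imports "HOL-Analysis.Analysis" "HOL-Library.Function_Algebras"
begin

type_synonym pt = "real \<times> real"

definition precM :: "pt \<Rightarrow> pt \<Rightarrow> bool" (infix "\<preceq>\<^sub>M" 50) where
  "p \<preceq>\<^sub>M q \<longleftrightarrow> fst q \<le> fst p \<and> snd p \<le> snd q"

definition Mstrip :: "real \<Rightarrow> real \<Rightarrow> pt set" where
  "Mstrip a b = {p. a \<le> fst p + snd p \<and> fst p + snd p \<le> b}"

definition lline :: "real \<Rightarrow> pt set" where
  "lline c = {p. fst p + snd p = c}"

definition bdryM :: "real \<Rightarrow> real \<Rightarrow> pt set" where
  "bdryM a b = lline a \<union> lline b"

definition intM :: "real \<Rightarrow> real \<Rightarrow> pt set" where
  "intM a b = Mstrip a b - bdryM a b"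

definition Tmap :: "real \<Rightarrow> real \<Rightarrow> pt \<Rightarrow> pt" where
  "Tmap a b p = (a - snd p, b - fst p)"

text \<open>Inverse of T: T(x,y) = (a-y, b-x), hence T^{-1}(x,y) = (b-y, a-x).\<close>
definition Tinv :: "real \<Rightarrow> real \<Rightarrow> pt \<Rightarrow> pt" where
  "Tinv a b p = (b - snd p, a - fst p)"

definition Tpow :: "real \<Rightarrow> real \<Rightarrow> int \<Rightarrow> pt \<Rightarrow> pt" where
  "Tpow a b k = (if 0 \<le> k then Tmap a b ^^ nat k else Tinv a b ^^ nat (- k))"

definition upM :: "real \<Rightarrow> real \<Rightarrow> pt \<Rightarrow> pt set" where
  "upM a b u = {v \<in> Mstrip a b. u \<preceq>\<^sub>M v}"

definition downM :: "real \<Rightarrow> real \<Rightarrow> pt \<Rightarrow> pt set" where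
  "downM a b u = {v \<in> Mstrip a b. v \<preceq>\<^sub>M u}"

definition intOf :: "real \<Rightarrow> real \<Rightarrow> pt set \<Rightarrow> pt set" where
  "intOf a b S = (top_of_set (Mstrip a b)) interior_of S"

text \<open>A functor G is represented by an ambient F-vector space 'v (scalar multiplication
  smul), a family of subspaces Sp u (u in M) and maps Mp u v : Sp v -> Sp u for u \<preceq> v
  (contravariance in \<preceq>).\<close>

definition is_functorM :: "real \<Rightarrow> real \<Rightarrow> ('f::field \<Rightarrow> 'v::ab_group_add \<Rightarrow> 'v)
    \<Rightarrow> (pt \<Rightarrow> 'v set) \<Rightarrow> (pt \<Rightarrow> pt \<Rightarrow> 'v \<Rightarrow> 'v) \<Rightarrow> bool" where
  "is_functorM a b smul Sp Mp \<longleftrightarrow>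
     vector_space smul \<and>
     (\<forall>u\<in>Mstrip a b. module.subspace smul (Sp u)) \<and>
     (\<forall>u\<in>Mstrip a b. \<forall>v\<in>Mstrip a b. u \<preceq>\<^sub>M v \<longrightarrow>
        (\<forall>x\<in>Sp v. Mp u v x \<in> Sp u) \<and>
        (\<forall>x\<in>Sp v. \<forall>y\<in>Sp v. Mp u v (x + y) = Mp u v x + Mp u v y) \<and>
        (\<forall>c. \<forall>x\<in>Sp v. Mp u v (smul c x) = smul c (Mp u v x))) \<and>
     (\<forall>u\<in>Mstrip a b. \<forall>x\<in>Sp u. Mp u u x = x) \<and>
     (\<forall>u\<in>Mstrip a b. \<forall>v\<in>Mstrip a b. \<forall>w\<in>Mstrip a b. u \<preceq>\<^sub>M v \<longrightarrow> v \<preceq>\<^sub>M w \<longrightarrow>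
        (\<forall>x\<in>Sp w. Mp u v (Mp v w x) = Mp u w x))"

definition pfd :: "real \<Rightarrow> real \<Rightarrow> ('f::field \<Rightarrow> 'v::ab_group_add \<Rightarrow> 'v) \<Rightarrow> (pt \<Rightarrow> 'v set) \<Rightarrow> bool" where
  "pfd a b smul Sp \<longleftrightarrow>
     (\<forall>u\<in>Mstrip a b. \<exists>B. finite B \<and> B \<subseteq> Sp u \<and> module.span smul B = Sp u)"

definition vanishes_on_bdry :: "real \<Rightarrow> real \<Rightarrow> (pt \<Rightarrow> 'v::ab_group_add set) \<Rightarrow> bool" where
  "vanishes_on_bdry a b Sp \<longleftrightarrow> (\<forall>u\<in>bdryM a b. Sp u = {0})"

text \<open>Exactness of the Z-indexed sequence ... -> G(p (n+1)) -> G(p n) -> G(p (n-1)) -> ...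
  obtained by applying the contravariant G to a chain ... \<preceq> p n \<preceq> p (n+1) \<preceq> ...\<close>
definition exact_along :: "(pt \<Rightarrow> 'v::ab_group_add set) \<Rightarrow> (pt \<Rightarrow> pt \<Rightarrow> 'v \<Rightarrow> 'v) \<Rightarrow> (int \<Rightarrow> pt) \<Rightarrow> bool" where
  "exact_along Sp Mp p \<longleftrightarrow>
     (\<forall>n. Mp (p n) (p (n + 1)) ` Sp (p (n + 1)) = {x \<in> Sp (p n). Mp (p (n - 1)) (p n) x = 0})"

text \<open>The chain ... \<preceq> T^{-1}v \<preceq> T^{-1}w \<preceq> u \<preceq> v \<preceq> w \<preceq> Tu \<preceq> Tv \<preceq> ..., indexed by Z with
  position 0 at u.\<close>
definition rect_chain :: "real \<Rightarrow> real \<Rightarrow> pt \<Rightarrow> pt \<Rightarrow> pt \<Rightarrow> int \<Rightarrow> pt" where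
  "rect_chain a b u v w n =
     Tpow a b (n div 3) (if n mod 3 = 0 then u else if n mod 3 = 1 then v else w)"

definition rect_corners :: "real \<Rightarrow> real \<Rightarrow> real \<Rightarrow> real \<Rightarrow> pt set" where
  "rect_corners x1 x2 y1 y2 = {(x1, y1), (x1, y2), (x2, y1), (x2, y2)}"

definition cohomological :: "real \<Rightarrow> real \<Rightarrow> (pt \<Rightarrow> 'v::ab_group_add set) \<Rightarrow> (pt \<Rightarrow> pt \<Rightarrow> 'v \<Rightarrow> 'v) \<Rightarrow> bool" where
  "cohomological a b Sp Mp \<longleftrightarrow>
     vanishes_on_bdry a b Sp \<and>
     (\<forall>x1 x2 y1 y2 c u v w. x1 < x2 \<and> y1 < y2 \<and>
        rect_corners x1 x2 y1 y2 \<subseteq> Mstrip a b \<and>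
        c \<in> lline b \<and> rect_corners x1 x2 y1 y2 = {c, u, v, w} \<and> c \<notin> {u, v, w} \<and>
        u \<preceq>\<^sub>M v \<and> v \<preceq>\<^sub>M w \<longrightarrow> exact_along Sp Mp (rect_chain a b u v w))"

definition seq_continuous :: "real \<Rightarrow> real \<Rightarrow> (pt \<Rightarrow> 'v set) \<Rightarrow> (pt \<Rightarrow> pt \<Rightarrow> 'v \<Rightarrow> 'v) \<Rightarrow> bool" where
  "seq_continuous a b Sp Mp \<longleftrightarrow>
     (\<forall>u s. u \<in> Mstrip a b \<and> (\<forall>k. s k \<in> Mstrip a b \<and> s k \<preceq>\<^sub>M s (Suc k)) \<and> s \<longlonglongrightarrow> u \<longrightarrow>
        bij_betw (\<lambda>x k. Mp (s k) u x) (Sp u)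
          {y. (\<forall>k. y k \<in> Sp (s k)) \<and> (\<forall>k. Mp (s k) (s (Suc k)) (y (Suc k)) = y k)})"

definition supp_in_down :: "real \<Rightarrow> real \<Rightarrow> (pt \<Rightarrow> 'v::ab_group_add set) \<Rightarrow> bool" where
  "supp_in_down a b Sp \<longleftrightarrow> (\<exists>w\<in>Mstrip a b. \<forall>u\<in>Mstrip a b. Sp u \<noteq> {0} \<longrightarrow> u \<preceq>\<^sub>M w)"

definition in_J :: "real \<Rightarrow> real \<Rightarrow> ('f::field \<Rightarrow> 'v::ab_group_add \<Rightarrow> 'v) \<Rightarrow> (pt \<Rightarrow> 'v set)
    \<Rightarrow> (pt \<Rightarrow> pt \<Rightarrow> 'v \<Rightarrow> 'v) \<Rightarrow> bool" where
  "in_J a b smul Sp Mp \<longleftrightarrow>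
     is_functorM a b smul Sp Mp \<and> pfd a b smul Sp \<and> cohomological a b Sp Mp \<and>
     seq_continuous a b Sp Mp \<and> supp_in_down a b Sp"

definition suppB :: "real \<Rightarrow> real \<Rightarrow> pt \<Rightarrow> pt set" where
  "suppB a b v = downM a b v \<inter> intOf a b (upM a b (Tinv a b v))"

definition admissible_betti :: "real \<Rightarrow> real \<Rightarrow> (pt \<Rightarrow> nat) \<Rightarrow> bool" where
  "admissible_betti a b \<beta> \<longleftrightarrow>
     (\<exists>w\<in>Mstrip a b. {v \<in> intM a b. \<beta> v \<noteq> 0} \<subseteq> downM a b w) \<and>
     (\<forall>u\<in>intM a b. finite {v \<in> intM a b \<inter> upM a b u \<inter> intOf a b (downM a b (Tmap a b u)). \<beta> v \<noteq> 0})"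

text \<open>Index set of the direct sum at u: pairs (v,i) with v in int M, i < \<beta> v, B_v(u) = F.\<close>
definition dsIdx :: "real \<Rightarrow> real \<Rightarrow> (pt \<Rightarrow> nat) \<Rightarrow> pt \<Rightarrow> (pt \<times> nat) set" where
  "dsIdx a b \<beta> u = {(v, i). v \<in> intM a b \<and> i < \<beta> v \<and> u \<in> suppB a b v}"

text \<open>Ambient space: functions (pt \<times> nat) \<Rightarrow> F with pointwise operations.\<close>
definition fscale :: "'f::field \<Rightarrow> ('i \<Rightarrow> 'f) \<Rightarrow> ('i \<Rightarrow> 'f)" where
  "fscale c f = (\<lambda>j. c * f j)"

text \<open>Direct sum: finitely supported families; product: all families.\<close>
definition dsSp :: "real \<Rightarrow> real \<Rightarrow> (pt \<Rightarrow> nat) \<Rightarrow> pt \<Rightarrow> (pt \<times> nat \<Rightarrow> 'f::field) set" where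
  "dsSp a b \<beta> u = {f. (\<forall>j. j \<notin> dsIdx a b \<beta> u \<longrightarrow> f j = 0) \<and> finite {j. f j \<noteq> 0}}"

definition prodSp :: "real \<Rightarrow> real \<Rightarrow> (pt \<Rightarrow> nat) \<Rightarrow> pt \<Rightarrow> (pt \<times> nat \<Rightarrow> 'f::field) set" where
  "prodSp a b \<beta> u = {f. \<forall>j. j \<notin> dsIdx a b \<beta> u \<longrightarrow> f j = 0}"

text \<open>Structure map u \<preceq> v: componentwise identity on summands B_v with B_v(u) = B_v(v) = F,
  zero otherwise; the same formula for direct sum and product.\<close>
definition dsMp :: "real \<Rightarrow> real \<Rightarrow> (pt \<Rightarrow> nat) \<Rightarrow> pt \<Rightarrow> pt \<Rightarrow> (pt \<times> nat \<Rightarrow> 'f::field) \<Rightarrow> (pt \<times> nat \<Rightarrow> 'f)" where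
  "dsMp a b \<beta> u v f = (\<lambda>j. if j \<in> dsIdx a b \<beta> u \<and> j \<in> dsIdx a b \<beta> v then f j else 0)"

end

theory Submission
  imports Defs
begin

text \<open>
  Everything reduces to the combinatorics of supports. The support of \<open>B\<^sub>v\<close> is the
  rectangle \<open>[v\<^sub>1, b - v\<^sub>2) \<times> (a - v\<^sub>1, v\<^sub>2]\<close>, and admissibility of \<open>\<beta>\<close> ensures that only
  finitely many rectangles carrying a summand contain a given point; hence the direct sum is
  pointwise finite-dimensional and equals the product. All structure maps restrict
  coordinates, so functoriality follows from order-convexity of the rectangles. Along a
  \<open>\<preceq>\<close>-increasing sequence the first coordinate decreases and the second increases, and the
  rectangle is closed and open on exactly the matching sides, so the sequence eventually lies
  in precisely the rectangles containing its limit: this gives sequential continuity.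
  Finally, a rectangle containing one point of a rectangle chain contains exactly one of its
  two neighbours, which makes every such chain exact.
\<close>

lemma precM_refl [simp]: "u \<preceq>\<^sub>M u"
  by (simp add: precM_def)

lemma precM_trans: "u \<preceq>\<^sub>M v \<Longrightarrow> v \<preceq>\<^sub>M w \<Longrightarrow> u \<preceq>\<^sub>M w"
  by (auto simp: precM_def)

lemma open_quadrant_subset_intOf:
  "{p \<in> Mstrip a b. c < fst p \<and> snd p < e} \<subseteq> intOf a b {p \<in> Mstrip a b. c \<le> fst p \<and> snd p \<le> e}"
proof -
  have "openin (top_of_set (Mstrip a b)) (Mstrip a b \<inter> ({c<..} \<times> {..<e}))"
    by (intro openin_open_Int open_Times open_lessThan open_greaterThan)
  then have "Mstrip a b \<inter> ({c<..} \<times> {..<e}) \<subseteq> intOf a b {p \<in> Mstrip a b. c \<le> fst p \<and> snd p \<le> e}"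
    unfolding intOf_def by (intro interior_of_maximal) auto
  then show ?thesis
    by auto
qed

lemma intOf_closed_quadrant:
  "intOf a b {p \<in> Mstrip a b. fst p \<le> c \<and> e \<le> snd p} = {p \<in> Mstrip a b. fst p < c \<and> e < snd p}"
proof
  have "openin (top_of_set (Mstrip a b)) (Mstrip a b \<inter> ({..<c} \<times> {e<..}))"
    by (intro openin_open_Int open_Times open_lessThan open_greaterThan)
  then have "Mstrip a b \<inter> ({..<c} \<times> {e<..}) \<subseteq> intOf a b {p \<in> Mstrip a b. fst p \<le> c \<and> e \<le> snd p}"
    unfolding intOf_def by (intro interior_of_maximal) auto
  then show "{p \<in> Mstrip a b. fst p < c \<and> e < snd p} \<subseteq> intOf a b {p \<in> Mstrip a b. fst p \<le> c \<and> e \<le> snd p}"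
    by auto
next
  show "intOf a b {p \<in> Mstrip a b. fst p \<le> c \<and> e \<le> snd p} \<subseteq> {p \<in> Mstrip a b. fst p < c \<and> e < snd p}"
  proof
    fix p assume "p \<in> intOf a b {p \<in> Mstrip a b. fst p \<le> c \<and> e \<le> snd p}"
    then obtain U where U: "open U" "p \<in> U" "p \<in> Mstrip a b"
        and U_sub: "Mstrip a b \<inter> U \<subseteq> {p \<in> Mstrip a b. fst p \<le> c \<and> e \<le> snd p}"
      unfolding intOf_def interior_of_def openin_open by blast
    obtain r where r: "r > 0" "ball p r \<subseteq> U"
      using U open_contains_ball by blast
    obtain x y where p: "p = (x, y)"
      by (cases p)
    define t where "t = r / 2"
    have "dist (x, y) (x + t, y - t) = sqrt (t\<^sup>2 + t\<^sup>2)"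
      by (simp add: dist_Pair_Pair dist_real_def)
    also have "\<dots> < sqrt (r\<^sup>2)"
      using r by (intro real_sqrt_less_mono) (simp add: t_def power2_eq_square field_simps)
    also have "\<dots> = r"
      using r by simp
    finally have "(x + t, y - t) \<in> U"
      using r p by (auto simp: ball_def)
    \<comment> \<open>moving along the direction (1, -1) does not leave the strip\<close>
    moreover have "(x + t, y - t) \<in> Mstrip a b"
      using U p by (simp add: Mstrip_def)
    ultimately have "x + t \<le> c \<and> e \<le> y - t"
      using U_sub by auto
    then show "p \<in> {p \<in> Mstrip a b. fst p < c \<and> e < snd p}"
      using U r p t_def by auto
  qed
qed

definition in_block :: "real \<Rightarrow> real \<Rightarrow> pt \<Rightarrow> pt \<Rightarrow> bool" where
  "in_block a b v u \<longleftrightarrow> fst u \<in> {fst v..<b - snd v} \<and> snd u \<in> {a - fst v<..snd v}"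

lemma suppB_iff_in_block: "u \<in> suppB a b v \<longleftrightarrow> in_block a b v u"
proof -
  have up: "upM a b (Tinv a b v) = {p \<in> Mstrip a b. fst p \<le> b - snd v \<and> a - fst v \<le> snd p}"
    by (auto simp: upM_def Tinv_def precM_def)
  show ?thesis
    unfolding suppB_def up intOf_closed_quadrant
    by (auto simp: downM_def precM_def in_block_def Mstrip_def)
qed

lemma in_block_intM: "in_block a b v u \<Longrightarrow> u \<in> intM a b"
  by (auto simp: in_block_def intM_def Mstrip_def bdryM_def lline_def)

lemma in_block_order_convex:
  "in_block a b v u \<Longrightarrow> in_block a b v w \<Longrightarrow> u \<preceq>\<^sub>M p \<Longrightarrow> p \<preceq>\<^sub>M w \<Longrightarrow> in_block a b v p"
  by (auto simp: in_block_def precM_def)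

lemma dsIdx_eq: "dsIdx a b \<beta> u = {(v, i). v \<in> intM a b \<and> i < \<beta> v \<and> in_block a b v u}"
  by (simp add: dsIdx_def suppB_iff_in_block)

lemma mem_dsIdx_iff:
  "j \<in> dsIdx a b \<beta> u \<longleftrightarrow> fst j \<in> intM a b \<and> snd j < \<beta> (fst j) \<and> in_block a b (fst j) u"
  by (cases j) (simp add: dsIdx_eq)

lemma dsIdx_order_convex:
  "j \<in> dsIdx a b \<beta> u \<Longrightarrow> j \<in> dsIdx a b \<beta> w \<Longrightarrow> u \<preceq>\<^sub>M p \<Longrightarrow> p \<preceq>\<^sub>M w \<Longrightarrow> j \<in> dsIdx a b \<beta> p"
  by (auto simp: mem_dsIdx_iff intro: in_block_order_convex)

lemma finite_dsIdx:
  assumes "admissible_betti a b \<beta>"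
  shows "finite (dsIdx a b \<beta> u)"
proof (cases "u \<in> intM a b")
  case True
  let ?V = "{v \<in> intM a b \<inter> upM a b u \<inter> intOf a b (downM a b (Tmap a b u)). \<beta> v \<noteq> 0}"
  have "finite ?V"
    using assms True unfolding admissible_betti_def by blast
  then have "finite (Sigma ?V (\<lambda>v. {..<\<beta> v}))"
    by auto
  moreover have "dsIdx a b \<beta> u \<subseteq> Sigma ?V (\<lambda>v. {..<\<beta> v})"
  proof
    fix j assume "j \<in> dsIdx a b \<beta> u"
    then obtain v i where j: "j = (v, i)" "v \<in> intM a b" "i < \<beta> v" "in_block a b v u"
      unfolding dsIdx_eq by blast
    then have "v \<in> Mstrip a b"
      by (simp add: intM_def)
    have down: "downM a b (Tmap a b u) = {p \<in> Mstrip a b. a - snd u \<le> fst p \<and> snd p \<le> b - fst u}"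
      by (auto simp: downM_def Tmap_def precM_def)
    have "v \<in> intOf a b (downM a b (Tmap a b u))"
      unfolding down using \<open>v \<in> Mstrip a b\<close> j(4)
      by (intro subsetD[OF open_quadrant_subset_intOf]) (auto simp: in_block_def)
    moreover have "v \<in> upM a b u"
      using \<open>v \<in> Mstrip a b\<close> j(4) by (auto simp: upM_def precM_def in_block_def)
    ultimately show "j \<in> Sigma ?V (\<lambda>v. {..<\<beta> v})"
      using j by auto
  qed
  ultimately show ?thesis
    by (rule finite_subset[rotated])
next
  case False
  then have "dsIdx a b \<beta> u = {}"
    unfolding dsIdx_eq using in_block_intM by blast
  then show ?thesis
    by simp
qed

lemma finite_nonzero_within:
  "finite I \<Longrightarrow> (\<And>j. j \<notin> I \<Longrightarrow> f j = 0) \<Longrightarrow> finite {j. f j \<noteq> 0}"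
  by (rule finite_subset[of _ I]) auto

lemma dsSp_eq_prodSp: "finite (dsIdx a b \<beta> u) \<Longrightarrow> dsSp a b \<beta> u = prodSp a b \<beta> u"
  unfolding dsSp_def prodSp_def by (auto intro!: finite_nonzero_within[of "dsIdx a b \<beta> u"])

lemma dsSp_eq_zero: "dsIdx a b \<beta> u = {} \<Longrightarrow> dsSp a b \<beta> u = {0}"
  by (auto simp: dsSp_def fun_eq_iff)

lemma dsSp_vanishes: "f \<in> dsSp a b \<beta> u \<Longrightarrow> j \<notin> dsIdx a b \<beta> u \<Longrightarrow> f j = 0"
  unfolding dsSp_def by blast

lemma dsMp_in_dsSp: "finite (dsIdx a b \<beta> u) \<Longrightarrow> dsMp a b \<beta> u v f \<in> dsSp a b \<beta> u"
  unfolding dsSp_def dsMp_def by (auto intro!: finite_nonzero_within[of "dsIdx a b \<beta> u"])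

lemma dsMp_self: "f \<in> dsSp a b \<beta> u \<Longrightarrow> dsMp a b \<beta> u u f = f"
  by (auto simp: dsMp_def dsSp_def fun_eq_iff)

lemma dsMp_comp:
  "u \<preceq>\<^sub>M v \<Longrightarrow> v \<preceq>\<^sub>M w \<Longrightarrow> dsMp a b \<beta> u v (dsMp a b \<beta> v w f) = dsMp a b \<beta> u w f"
  by (auto simp: dsMp_def fun_eq_iff intro: dsIdx_order_convex)

lemma vector_space_fscale: "vector_space (fscale :: 'f::field \<Rightarrow> ('i \<Rightarrow> 'f) \<Rightarrow> _)"
  by unfold_locales (auto simp: fscale_def fun_eq_iff algebra_simps)

lemma subspace_dsSp:
  assumes "finite (dsIdx a b \<beta> u)"
  shows "module.subspace (fscale :: 'f::field \<Rightarrow> _) (dsSp a b \<beta> u :: (pt \<times> nat \<Rightarrow> 'f) set)"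
proof -
  interpret vector_space "fscale :: 'f \<Rightarrow> (pt \<times> nat \<Rightarrow> 'f) \<Rightarrow> _"
    by (rule vector_space_fscale)
  show ?thesis
    using assms unfolding subspace_def dsSp_def fscale_def
    by (auto intro!: finite_nonzero_within[of "dsIdx a b \<beta> u"])
qed

lemma is_functorM_ds:
  assumes "\<And>u. finite (dsIdx a b \<beta> u)"
  shows "is_functorM a b (fscale :: 'f::field \<Rightarrow> _) (dsSp a b \<beta>) (dsMp a b \<beta>)"
  unfolding is_functorM_def
proof (intro conjI ballI allI impI)
  fix u v c and f g :: "pt \<times> nat \<Rightarrow> 'f"
  show "vector_space (fscale :: 'f \<Rightarrow> (pt \<times> nat \<Rightarrow> 'f) \<Rightarrow> _)"
    by (rule vector_space_fscale)
  show "module.subspace (fscale :: 'f \<Rightarrow> _) (dsSp a b \<beta> u :: (pt \<times> nat \<Rightarrow> 'f) set)"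
    by (rule subspace_dsSp[OF assms])
  show "dsMp a b \<beta> u v f \<in> dsSp a b \<beta> u"
    by (rule dsMp_in_dsSp[OF assms])
  show "dsMp a b \<beta> u v (f + g) = dsMp a b \<beta> u v f + dsMp a b \<beta> u v g"
    by (auto simp: dsMp_def fun_eq_iff)
  show "dsMp a b \<beta> u v (fscale c f) = fscale c (dsMp a b \<beta> u v f)"
    by (auto simp: dsMp_def fscale_def fun_eq_iff)
next
  fix u and f :: "pt \<times> nat \<Rightarrow> 'f"
  assume "f \<in> dsSp a b \<beta> u"
  then show "dsMp a b \<beta> u u f = f"
    by (rule dsMp_self)
next
  fix u v w and f :: "pt \<times> nat \<Rightarrow> 'f"
  assume "u \<preceq>\<^sub>M v" "v \<preceq>\<^sub>M w"
  then show "dsMp a b \<beta> u v (dsMp a b \<beta> v w f) = dsMp a b \<beta> u w f"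
    by (rule dsMp_comp)
qed

lemma sum_fun_apply: "sum f A x = (\<Sum>a\<in>A. f a x)"
  by (induction A rule: infinite_finite_induct) auto

lemma pfd_ds:
  assumes fin: "\<And>u. finite (dsIdx a b \<beta> u)"
  shows "pfd a b (fscale :: 'f::field \<Rightarrow> _) (dsSp a b \<beta>)"
  unfolding pfd_def
proof
  fix u
  interpret vs: vector_space "fscale :: 'f \<Rightarrow> (pt \<times> nat \<Rightarrow> 'f) \<Rightarrow> _"
    by (rule vector_space_fscale)
  define \<delta> :: "pt \<times> nat \<Rightarrow> pt \<times> nat \<Rightarrow> 'f" where "\<delta> j = (\<lambda>k. if k = j then 1 else 0)" for j
  let ?B = "\<delta> ` dsIdx a b \<beta> u"
  have B_sub: "?B \<subseteq> dsSp a b \<beta> u"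
    by (auto simp: dsSp_def \<delta>_def)
  have "dsSp a b \<beta> u \<subseteq> vs.span ?B"
  proof
    fix f :: "pt \<times> nat \<Rightarrow> 'f" assume f: "f \<in> dsSp a b \<beta> u"
    have "f = (\<Sum>j\<in>dsIdx a b \<beta> u. fscale (f j) (\<delta> j))"
      using f fin[of u]
      by (auto simp: fun_eq_iff sum_fun_apply fscale_def \<delta>_def dsSp_def if_distrib cong: if_cong)
    also have "\<dots> \<in> vs.span ?B"
      by (intro vs.span_sum vs.span_scale vs.span_base) auto
    finally show "f \<in> vs.span ?B" .
  qed
  then have "vs.span ?B = dsSp a b \<beta> u"
    using B_sub subspace_dsSp[OF fin, of u] by (intro vs.span_subspace) auto
  then show "\<exists>B. finite B \<and> B \<subseteq> dsSp a b \<beta> u \<and> vs.span B = dsSp a b \<beta> u"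
    using B_sub fin[of u] by blast
qed

lemma vanishes_on_bdry_ds: "vanishes_on_bdry a b (dsSp a b \<beta>)"
  unfolding vanishes_on_bdry_def
proof
  fix u assume "u \<in> bdryM a b"
  then have "dsIdx a b \<beta> u = {}"
    using in_block_intM unfolding dsIdx_eq intM_def by blast
  then show "dsSp a b \<beta> u = {0}"
    by (rule dsSp_eq_zero)
qed

lemma supp_in_down_ds:
  assumes "admissible_betti a b \<beta>"
  shows "supp_in_down a b (dsSp a b \<beta> :: pt \<Rightarrow> (pt \<times> nat \<Rightarrow> 'f::field) set)"
proof -
  obtain w where w: "w \<in> Mstrip a b" "{v \<in> intM a b. \<beta> v \<noteq> 0} \<subseteq> downM a b w"
    using assms unfolding admissible_betti_def by blast
  have "u \<preceq>\<^sub>M w" if "(dsSp a b \<beta> u :: (pt \<times> nat \<Rightarrow> 'f) set) \<noteq> {0}" for u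
  proof -
    have "dsIdx a b \<beta> u \<noteq> {}"
      using that dsSp_eq_zero by blast
    then obtain v i where "v \<in> intM a b" "i < \<beta> v" "in_block a b v u"
      unfolding dsIdx_eq by blast
    with w show "u \<preceq>\<^sub>M w"
      by (auto simp: downM_def precM_def in_block_def)
  qed
  with w show ?thesis
    unfolding supp_in_down_def by blast
qed

lemma decseq_eventually_in_atLeastLessThan_iff:
  fixes x :: "nat \<Rightarrow> 'a::linorder_topology"
  assumes "decseq x" "x \<longlonglongrightarrow> l"
  shows "eventually (\<lambda>k. x k \<in> {\<alpha>..<\<beta>} \<longleftrightarrow> l \<in> {\<alpha>..<\<beta>}) sequentially"
proof -
  have ge: "l \<le> x k" for k
    using decseq_ge[OF assms] .
  have "eventually (\<lambda>k. \<alpha> \<le> x k \<longleftrightarrow> \<alpha> \<le> l) sequentially"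
  proof (cases "l < \<alpha>")
    case True
    show ?thesis
      using order_tendstoD(2)[OF assms(2) True] by eventually_elim (use True in auto)
  next
    case False
    then have "\<alpha> \<le> x k" for k
      using ge[of k] by (simp add: not_less order_trans)
    with False show ?thesis
      by simp
  qed
  moreover have "eventually (\<lambda>k. x k < \<beta> \<longleftrightarrow> l < \<beta>) sequentially"
  proof (cases "l < \<beta>")
    case True
    show ?thesis
      using order_tendstoD(2)[OF assms(2) True] by eventually_elim (use True in auto)
  next
    case False
    then have "\<not> x k < \<beta>" for k
      using ge[of k] by (simp add: not_less order_trans)
    with False show ?thesis
      by simp
  qed
  ultimately show ?thesis
    by eventually_elim auto
qed

lemma incseq_eventually_in_greaterThanAtMost_iff:
  fixes y :: "nat \<Rightarrow> 'a::{linorder_topology, linordered_ab_group_add, topological_ab_group_add}"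
  assumes "incseq y" "y \<longlonglongrightarrow> l"
  shows "eventually (\<lambda>k. y k \<in> {\<alpha><..\<beta>} \<longleftrightarrow> l \<in> {\<alpha><..\<beta>}) sequentially"
proof -
  have "decseq (\<lambda>k. - y k)" "(\<lambda>k. - y k) \<longlonglongrightarrow> - l"
    using assms by (auto simp: incseq_def decseq_def intro: tendsto_minus)
  from decseq_eventually_in_atLeastLessThan_iff[OF this, of "- \<beta>" "- \<alpha>"]
  show ?thesis
    by eventually_elim auto
qed

lemma precM_chain_mono:
  assumes "\<And>k. s k \<preceq>\<^sub>M s (Suc k)" and "k \<le> m"
  shows "s k \<preceq>\<^sub>M s m"
  using assms(2) by (induction m rule: dec_induct) (auto intro: precM_trans assms(1))

lemma precM_chain_limit:
  assumes "\<And>k. s k \<preceq>\<^sub>M s (Suc k)" and "s \<longlonglongrightarrow> u"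
  shows "decseq (\<lambda>k. fst (s k))" "incseq (\<lambda>k. snd (s k))" "s k \<preceq>\<^sub>M u"
proof -
  show dec: "decseq (\<lambda>k. fst (s k))" and inc: "incseq (\<lambda>k. snd (s k))"
    using assms(1) by (auto intro: decseq_SucI incseq_SucI simp: precM_def)
  have "fst u \<le> fst (s k)" "snd (s k) \<le> snd u"
    using decseq_ge[OF dec tendsto_fst[OF assms(2)]] incseq_le[OF inc tendsto_snd[OF assms(2)]] by auto
  then show "s k \<preceq>\<^sub>M u"
    by (simp add: precM_def)
qed

lemma eventually_dsIdx_iff_limit:
  assumes "\<And>k. s k \<preceq>\<^sub>M s (Suc k)" and "s \<longlonglongrightarrow> u"
  shows "eventually (\<lambda>k. j \<in> dsIdx a b \<beta> (s k) \<longleftrightarrow> j \<in> dsIdx a b \<beta> u) sequentially"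
proof -
  have "eventually (\<lambda>k. in_block a b (fst j) (s k) \<longleftrightarrow> in_block a b (fst j) u) sequentially"
    using decseq_eventually_in_atLeastLessThan_iff[OF precM_chain_limit(1)[OF assms]
        tendsto_fst[OF assms(2)]]
      incseq_eventually_in_greaterThanAtMost_iff[OF precM_chain_limit(2)[OF assms]
        tendsto_snd[OF assms(2)]]
    unfolding in_block_def by eventually_elim blast
  then show ?thesis
    by eventually_elim (auto simp: mem_dsIdx_iff)
qed

lemma dsMp_compatible_family:
  assumes chain: "\<And>k. s k \<preceq>\<^sub>M s (Suc k)"
    and y: "\<And>k. y k \<in> dsSp a b \<beta> (s k)" "\<And>k. dsMp a b \<beta> (s k) (s (Suc k)) (y (Suc k)) = y k"
    and "k \<le> m"
  shows "y k = dsMp a b \<beta> (s k) (s m) (y m)"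
  using \<open>k \<le> m\<close>
proof (induction m rule: dec_induct)
  case base
  show ?case
    using dsMp_self[OF y(1)] by simp
next
  case (step n)
  have "s k \<preceq>\<^sub>M s n"
    using precM_chain_mono[of s, OF chain step.hyps(1)] .
  have "y k = dsMp a b \<beta> (s k) (s n) (dsMp a b \<beta> (s n) (s (Suc n)) (y (Suc n)))"
    using step.IH y(2)[of n] by simp
  also have "\<dots> = dsMp a b \<beta> (s k) (s (Suc n)) (y (Suc n))"
    using \<open>s k \<preceq>\<^sub>M s n\<close> chain by (rule dsMp_comp)
  finally show ?case .
qed

lemma inj_on_dsMp_limit:
  assumes "\<And>k. s k \<preceq>\<^sub>M s (Suc k)" and "s \<longlonglongrightarrow> u"
  shows "inj_on (\<lambda>x k. dsMp a b \<beta> (s k) u x) (dsSp a b \<beta> u)"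
proof (rule inj_onI, rule ext)
  fix x x' j
  assume x: "x \<in> dsSp a b \<beta> u" "x' \<in> dsSp a b \<beta> u"
    and eq: "(\<lambda>k. dsMp a b \<beta> (s k) u x) = (\<lambda>k. dsMp a b \<beta> (s k) u x')"
  show "x j = x' j"
  proof (cases "j \<in> dsIdx a b \<beta> u")
    case True
    then obtain k where "j \<in> dsIdx a b \<beta> (s k)"
      using eventually_dsIdx_iff_limit[OF assms, of j a b \<beta>]
      unfolding eventually_sequentially by blast
    with True show ?thesis
      using fun_cong[OF fun_cong[OF eq, of k], of j] by (simp add: dsMp_def)
  next
    case False
    with x show ?thesis
      by (simp add: dsSp_vanishes)
  qed
qed

lemma dsMp_limit_surj:
  assumes fin: "finite (dsIdx a b \<beta> u)"
    and chain: "\<And>k. s k \<preceq>\<^sub>M s (Suc k)" and lim: "s \<longlonglongrightarrow> u"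
    and y: "\<And>k. y k \<in> dsSp a b \<beta> (s k)" "\<And>k. dsMp a b \<beta> (s k) (s (Suc k)) (y (Suc k)) = y k"
  obtains x where "x \<in> dsSp a b \<beta> u" "y = (\<lambda>k. dsMp a b \<beta> (s k) u x)"
proof -
  let ?I = "dsIdx a b \<beta>"
  have "\<forall>j\<in>?I u. eventually (\<lambda>k. j \<in> ?I (s k)) sequentially"
  proof
    fix j assume "j \<in> ?I u"
    then show "eventually (\<lambda>k. j \<in> ?I (s k)) sequentially"
      using eventually_dsIdx_iff_limit[OF chain lim, of j a b \<beta>] by simp
  qed
  then have "eventually (\<lambda>k. \<forall>j\<in>?I u. j \<in> ?I (s k)) sequentially"
    by (rule eventually_ball_finite[OF fin])
  then obtain N where N: "\<forall>j\<in>?I u. j \<in> ?I (s N)"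
    unfolding eventually_sequentially by blast
  \<comment> \<open>the restriction of y N to the summands present at u\<close>
  define x where "x = dsMp a b \<beta> u (s N) (y N)"
  have "y k j = dsMp a b \<beta> (s k) u x j" for k j
  proof -
    obtain M where M: "\<forall>m\<ge>M. j \<in> ?I (s m) \<longleftrightarrow> j \<in> ?I u"
      using eventually_dsIdx_iff_limit[OF chain lim, of j a b \<beta>]
      unfolding eventually_sequentially by blast
    define m where "m = max M (max k N)"
    have "y k = dsMp a b \<beta> (s k) (s m) (y m)" "y N = dsMp a b \<beta> (s N) (s m) (y m)"
      using dsMp_compatible_family[where s=s and y=y, OF chain y, of k m]
        dsMp_compatible_family[where s=s and y=y, OF chain y, of N m]
      by (simp_all add: m_def)
    moreover have "j \<in> ?I (s m) \<longleftrightarrow> j \<in> ?I u"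
      using M by (simp add: m_def)
    ultimately show ?thesis
      using N by (cases "j \<in> ?I u") (simp_all add: x_def dsMp_def)
  qed
  then have "y = (\<lambda>k. dsMp a b \<beta> (s k) u x)"
    by (simp add: fun_eq_iff)
  moreover have "x \<in> dsSp a b \<beta> u"
    unfolding x_def by (rule dsMp_in_dsSp[OF fin])
  ultimately show thesis
    using that by blast
qed

lemma seq_continuous_ds:
  assumes fin: "\<And>u. finite (dsIdx a b \<beta> u)"
  shows "seq_continuous a b (dsSp a b \<beta> :: pt \<Rightarrow> (pt \<times> nat \<Rightarrow> 'f::field) set) (dsMp a b \<beta>)"
  unfolding seq_continuous_def
proof (intro allI impI)
  fix u and s :: "nat \<Rightarrow> pt"
  assume "u \<in> Mstrip a b \<and> (\<forall>k. s k \<in> Mstrip a b \<and> s k \<preceq>\<^sub>M s (Suc k)) \<and> s \<longlonglongrightarrow> u"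
  then have chain: "\<And>k. s k \<preceq>\<^sub>M s (Suc k)" and lim: "s \<longlonglongrightarrow> u"
    by auto
  let ?Y = "{y :: nat \<Rightarrow> pt \<times> nat \<Rightarrow> 'f. (\<forall>k. y k \<in> dsSp a b \<beta> (s k)) \<and>
    (\<forall>k. dsMp a b \<beta> (s k) (s (Suc k)) (y (Suc k)) = y k)}"
  have "(\<lambda>x k. dsMp a b \<beta> (s k) u x) ` dsSp a b \<beta> u \<subseteq> ?Y"
    using dsMp_in_dsSp[OF fin] dsMp_comp[OF chain precM_chain_limit(3)[OF chain lim]] by blast
  moreover have "?Y \<subseteq> (\<lambda>x k. dsMp a b \<beta> (s k) u x) ` dsSp a b \<beta> u"
  proof
    fix y assume "y \<in> ?Y"
    then have "\<And>k. y k \<in> dsSp a b \<beta> (s k)" "\<And>k. dsMp a b \<beta> (s k) (s (Suc k)) (y (Suc k)) = y k"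
      by auto
    then obtain x where "x \<in> dsSp a b \<beta> u" "y = (\<lambda>k. dsMp a b \<beta> (s k) u x)"
      by (rule dsMp_limit_surj[OF fin chain lim])
    then show "y \<in> (\<lambda>x k. dsMp a b \<beta> (s k) u x) ` dsSp a b \<beta> u"
      by blast
  qed
  ultimately have "(\<lambda>x k. dsMp a b \<beta> (s k) u x) ` dsSp a b \<beta> u = ?Y"
    by (rule subset_antisym)
  with inj_on_dsMp_limit[OF chain lim]
  show "bij_betw (\<lambda>x k. dsMp a b \<beta> (s k) u x) (dsSp a b \<beta> u) ?Y"
    unfolding bij_betw_def by (rule conjI)
qed

lemma Tpow_succ: "Tpow a b (m + 1) q = Tmap a b (Tpow a b m q)"
proof (cases "0 \<le> m")
  case True
  then have "nat (m + 1) = Suc (nat m)"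
    by simp
  with True show ?thesis
    by (simp add: Tpow_def)
next
  case False
  then have "nat (- m) = Suc (nat (- (m + 1)))"
    by simp
  moreover have "Tmap a b (Tinv a b p) = p" for p
    by (simp add: Tmap_def Tinv_def)
  ultimately show ?thesis
    using False by (simp add: Tpow_def)
qed

lemma Tpow_pred: "Tpow a b (m - 1) q = Tinv a b (Tpow a b m q)"
  using Tpow_succ[of a b "m - 1" q] by (simp add: Tmap_def Tinv_def)

lemma Tpow_even: "Tpow a b (2 * k) q = (fst q - of_int k * (b - a), snd q + of_int k * (b - a))"
proof (induction k rule: int_induct[where k = 0])
  case base
  then show ?case
    by (simp add: Tpow_def)
next
  case (step1 i)
  have "Tpow a b (2 * (i + 1)) q = Tmap a b (Tmap a b (Tpow a b (2 * i) q))"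
    using Tpow_succ[of a b "2 * i + 1"] Tpow_succ[of a b "2 * i"] by (simp add: algebra_simps)
  with step1 show ?case
    by (simp add: Tmap_def algebra_simps)
next
  case (step2 i)
  have "Tpow a b (2 * (i - 1)) q = Tinv a b (Tinv a b (Tpow a b (2 * i) q))"
    using Tpow_pred[of a b "2 * i - 1"] Tpow_pred[of a b "2 * i"] by (simp add: algebra_simps)
  with step2 show ?case
    by (simp add: Tinv_def algebra_simps)
qed

lemma Tpow_odd:
  "Tpow a b (2 * k + 1) q = (a - snd q - of_int k * (b - a), b - fst q + of_int k * (b - a))"
  unfolding Tpow_succ Tpow_even by (simp add: Tmap_def algebra_simps)

lemma rect_chain_values:
  fixes a b :: real and k :: int
  defines "K \<equiv> of_int k * (b - a)"
  shows "rect_chain a b u v w (6 * k) = (fst u - K, snd u + K)"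
    "rect_chain a b u v w (6 * k + 1) = (fst v - K, snd v + K)"
    "rect_chain a b u v w (6 * k + 2) = (fst w - K, snd w + K)"
    "rect_chain a b u v w (6 * k + 3) = (a - snd u - K, b - fst u + K)"
    "rect_chain a b u v w (6 * k + 4) = (a - snd v - K, b - fst v + K)"
    "rect_chain a b u v w (6 * k + 5) = (a - snd w - K, b - fst w + K)"
proof -
  have "rect_chain a b u v w (6 * k + r) =
      Tpow a b (2 * k + r div 3) (if r mod 3 = 0 then u else if r mod 3 = 1 then v else w)"
    if "0 \<le> r" "r < 6" for r
  proof -
    have "(6 * k + r) div 3 = 2 * k + r div 3" "(6 * k + r) mod 3 = r mod 3"
      using that by presburger+
    then show ?thesis
      by (simp add: rect_chain_def)
  qed
  from this[of 0] this[of 1] this[of 2] this[of 3] this[of 4] this[of 5]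
  show "rect_chain a b u v w (6 * k) = (fst u - K, snd u + K)"
    "rect_chain a b u v w (6 * k + 1) = (fst v - K, snd v + K)"
    "rect_chain a b u v w (6 * k + 2) = (fst w - K, snd w + K)"
    "rect_chain a b u v w (6 * k + 3) = (a - snd u - K, b - fst u + K)"
    "rect_chain a b u v w (6 * k + 4) = (a - snd v - K, b - fst v + K)"
    "rect_chain a b u v w (6 * k + 5) = (a - snd w - K, b - fst w + K)"
    by (simp_all add: K_def Tpow_even Tpow_odd)
qed

lemma in_block_rect_chain_neighbours:
  fixes n :: int
  assumes "x1 < x2" "y1 < y2" "x2 + y2 = b" "a \<le> x1 + y1"
    and "in_block a b z (rect_chain a b (x2, y1) (x1, y1) (x1, y2) n)"
  shows "in_block a b z (rect_chain a b (x2, y1) (x1, y1) (x1, y2) (n + 1)) \<longleftrightarrow>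
    \<not> in_block a b z (rect_chain a b (x2, y1) (x1, y1) (x1, y2) (n - 1))"
proof -
  \<comment> \<open>\<open>T\<^sup>2\<close> translates by \<open>(a - b, b - a)\<close>, so the chain is 6-periodic up to
    translation\<close>
  define k where "k = n div 6"
  define p where "p = rect_chain a b (x2, y1) (x1, y1) (x1, y2)"
  define K where "K = of_int k * (b - a)"
  have K: "of_int (k - 1) * (b - a) = K - (b - a)" "of_int (k + 1) * (b - a) = K + (b - a)"
    by (simp_all add: K_def algebra_simps)
  note chain = rect_chain_values[of a b "(x2, y1)" "(x1, y1)" "(x1, y2)" k, folded K_def p_def]
    rect_chain_values[of a b "(x2, y1)" "(x1, y1)" "(x1, y2)" "k - 1", unfolded K, folded p_def]
    rect_chain_values[of a b "(x2, y1)" "(x1, y1)" "(x1, y2)" "k + 1", unfolded K, folded p_def]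
  have z: "in_block a b z (p n)"
    using assms(5) by (simp add: p_def)
  have "n = 6 * k + n mod 6" "0 \<le> n mod 6" "n mod 6 < 6"
    unfolding k_def by simp_all
  then consider "n = 6 * k" | "n = 6 * k + 1" | "n = 6 * k + 2" | "n = 6 * k + 3"
    | "n = 6 * k + 4" | "n = 6 * k + 5"
    by linarith
  then show ?thesis
  proof cases
    case 1
    then have e: "n + 1 = 6 * k + 1" "n - 1 = 6 * (k - 1) + 5"
      by simp_all
    show ?thesis
      using z assms(1-4) unfolding p_def[symmetric] e unfolding 1 chain
      by (simp add: in_block_def) linarith
  next
    case 2
    then have e: "n + 1 = 6 * k + 2" "n - 1 = 6 * k"
      by simp_all
    show ?thesis
      using z assms(1-4) unfolding p_def[symmetric] e unfolding 2 chain
      by (simp add: in_block_def) linarith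
  next
    case 3
    then have e: "n + 1 = 6 * k + 3" "n - 1 = 6 * k + 1"
      by simp_all
    show ?thesis
      using z assms(1-4) unfolding p_def[symmetric] e unfolding 3 chain
      by (simp add: in_block_def) linarith
  next
    case 4
    then have e: "n + 1 = 6 * k + 4" "n - 1 = 6 * k + 2"
      by simp_all
    show ?thesis
      using z assms(1-4) unfolding p_def[symmetric] e unfolding 4 chain
      by (simp add: in_block_def) linarith
  next
    case 5
    then have e: "n + 1 = 6 * k + 5" "n - 1 = 6 * k + 3"
      by simp_all
    show ?thesis
      using z assms(1-4) unfolding p_def[symmetric] e unfolding 5 chain
      by (simp add: in_block_def) linarith
  next
    case 6
    then have e: "n + 1 = 6 * (k + 1)" "n - 1 = 6 * k + 4"
      by simp_all
    show ?thesis
      using z assms(1-4) unfolding p_def[symmetric] e unfolding 6 chain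
      by (simp add: in_block_def) linarith
  qed
qed

lemma exact_along_ds:
  assumes fin: "\<And>u. finite (dsIdx a b \<beta> u)"
    and neighbours: "\<And>n j. j \<in> dsIdx a b \<beta> (p n) \<Longrightarrow>
      j \<in> dsIdx a b \<beta> (p (n + 1)) \<longleftrightarrow> j \<notin> dsIdx a b \<beta> (p (n - 1))"
  shows "exact_along (dsSp a b \<beta> :: pt \<Rightarrow> (pt \<times> nat \<Rightarrow> 'f::field) set) (dsMp a b \<beta>) p"
  unfolding exact_along_def
proof
  fix n
  let ?I = "dsIdx a b \<beta>" and ?Mp = "dsMp a b \<beta>"
  let ?ker = "{x \<in> dsSp a b \<beta> (p n). ?Mp (p (n - 1)) (p n) x = (0 :: pt \<times> nat \<Rightarrow> 'f)}"
  have "?Mp (p n) (p (n + 1)) f \<in> ?ker" for f :: "pt \<times> nat \<Rightarrow> 'f"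
  proof -
    have "?Mp (p (n - 1)) (p n) (?Mp (p n) (p (n + 1)) f) = 0"
      using neighbours[of _ n] by (auto simp: dsMp_def fun_eq_iff)
    then show ?thesis
      using dsMp_in_dsSp[OF fin] by blast
  qed
  moreover have "x \<in> ?Mp (p n) (p (n + 1)) ` dsSp a b \<beta> (p (n + 1))" if x: "x \<in> ?ker" for x
  proof -
    from x have x_sp: "x \<in> dsSp a b \<beta> (p n)" and x_ker: "?Mp (p (n - 1)) (p n) x = 0"
      by auto
    have "x j = 0" if "j \<notin> ?I (p (n + 1))" for j
    proof (cases "j \<in> ?I (p n)")
      case True
      with that neighbours[of j n] have "j \<in> ?I (p (n - 1))"
        by blast
      with True show ?thesis
        using fun_cong[OF x_ker, of j] by (simp add: dsMp_def)
    next
      case False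
      with x_sp show ?thesis
        by (rule dsSp_vanishes)
    qed
    then have "x \<in> dsSp a b \<beta> (p (n + 1))" "x = ?Mp (p n) (p (n + 1)) x"
      using x_sp by (auto simp: dsSp_def dsMp_def fun_eq_iff)
    then show ?thesis
      by blast
  qed
  ultimately show "?Mp (p n) (p (n + 1)) ` dsSp a b \<beta> (p (n + 1)) = ?ker"
    by blast
qed

lemma rect_corners_configuration:
  assumes "x1 < x2" "y1 < y2" "rect_corners x1 x2 y1 y2 \<subseteq> Mstrip a b"
    and "c \<in> lline b" "rect_corners x1 x2 y1 y2 = {c, u, v, w}" "c \<notin> {u, v, w}"
    and "u \<preceq>\<^sub>M v" "v \<preceq>\<^sub>M w"
  shows "u = (x2, y1)" "v = (x1, y1)" "w = (x1, y2)" "x2 + y2 = b" "a \<le> x1 + y1"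
proof -
  have M: "(x1, y1) \<in> Mstrip a b" "(x1, y2) \<in> Mstrip a b" "(x2, y1) \<in> Mstrip a b"
      "(x2, y2) \<in> Mstrip a b"
    using assms(3) by (auto simp: rect_corners_def)
  have "c \<in> rect_corners x1 x2 y1 y2"
    using assms(5) by auto
  then have c: "c = (x2, y2)"
    using M assms(1,2,4) by (auto simp: rect_corners_def Mstrip_def lline_def)
  have "(x1, y1) \<in> {u, v, w}" "(x1, y2) \<in> {u, v, w}" "(x2, y1) \<in> {u, v, w}"
    using assms(1,2,5) c by (auto simp: rect_corners_def set_eq_iff)
  moreover have "u \<in> rect_corners x1 x2 y1 y2" "v \<in> rect_corners x1 x2 y1 y2"
      "w \<in> rect_corners x1 x2 y1 y2"
    using assms(5) by auto
  then have "u \<in> {(x1, y1), (x1, y2), (x2, y1)}" "v \<in> {(x1, y1), (x1, y2), (x2, y1)}"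
      "w \<in> {(x1, y1), (x1, y2), (x2, y1)}"
    using assms(6) c by (auto simp: rect_corners_def)
  ultimately show "u = (x2, y1)" "v = (x1, y1)" "w = (x1, y2)"
    using assms(1,2,7,8) by (auto simp: precM_def)
  show "x2 + y2 = b"
    using assms(4) c by (simp add: lline_def)
  show "a \<le> x1 + y1"
    using M(1) by (simp add: Mstrip_def)
qed

lemma cohomological_ds:
  assumes fin: "\<And>u. finite (dsIdx a b \<beta> u)"
  shows "cohomological a b (dsSp a b \<beta> :: pt \<Rightarrow> (pt \<times> nat \<Rightarrow> 'f::field) set) (dsMp a b \<beta>)"
  unfolding cohomological_def
proof (intro conjI vanishes_on_bdry_ds allI impI)
  fix x1 x2 y1 y2 c u v w
  assume rect: "x1 < x2 \<and> y1 < y2 \<and> rect_corners x1 x2 y1 y2 \<subseteq> Mstrip a b \<and>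
    c \<in> lline b \<and> rect_corners x1 x2 y1 y2 = {c, u, v, w} \<and> c \<notin> {u, v, w} \<and>
    u \<preceq>\<^sub>M v \<and> v \<preceq>\<^sub>M w"
  then have "x1 < x2" "y1 < y2" "rect_corners x1 x2 y1 y2 \<subseteq> Mstrip a b" "c \<in> lline b"
    "rect_corners x1 x2 y1 y2 = {c, u, v, w}" "c \<notin> {u, v, w}" "u \<preceq>\<^sub>M v" "v \<preceq>\<^sub>M w"
    by blast+
  note corners = rect_corners_configuration[OF this]
  have neighbours: "in_block a b z (rect_chain a b (x2, y1) (x1, y1) (x1, y2) (n + 1)) \<longleftrightarrow>
      \<not> in_block a b z (rect_chain a b (x2, y1) (x1, y1) (x1, y2) (n - 1))"
    if "in_block a b z (rect_chain a b (x2, y1) (x1, y1) (x1, y2) n)" for z n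
    using in_block_rect_chain_neighbours[OF \<open>x1 < x2\<close> \<open>y1 < y2\<close> corners(4,5) that] .
  have "exact_along (dsSp a b \<beta> :: pt \<Rightarrow> (pt \<times> nat \<Rightarrow> 'f) set) (dsMp a b \<beta>)
      (rect_chain a b (x2, y1) (x1, y1) (x1, y2))"
    by (rule exact_along_ds[OF fin]) (simp add: mem_dsIdx_iff neighbours)
  then show "exact_along (dsSp a b \<beta> :: pt \<Rightarrow> (pt \<times> nat \<Rightarrow> 'f) set) (dsMp a b \<beta>)
      (rect_chain a b u v w)"
    unfolding corners(1-3) .
qed

theorem lemma4p8:
  fixes a b :: real and \<beta> :: "pt \<Rightarrow> nat"
  assumes "a < b" and "admissible_betti a b \<beta>"
  shows "in_J a b (fscale :: 'f::field \<Rightarrow> _) (dsSp a b \<beta>) (dsMp a b \<beta>)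
         \<and> pfd a b (fscale :: 'f \<Rightarrow> _) (dsSp a b \<beta>)
         \<and> (\<forall>u\<in>Mstrip a b. (dsSp a b \<beta> u :: (pt \<times> nat \<Rightarrow> 'f) set) = prodSp a b \<beta> u)"
proof -
  have fin: "\<And>u. finite (dsIdx a b \<beta> u)"
    using finite_dsIdx[OF assms(2)] .
  show ?thesis
    unfolding in_J_def
    using is_functorM_ds[OF fin] pfd_ds[OF fin] cohomological_ds[OF fin] seq_continuous_ds[OF fin]
      supp_in_down_ds[OF assms(2)] dsSp_eq_prodSp[OF fin]
    by blast
qed

end
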